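(* (1) For $s\in\{0,1,\dots,\lfloor\frac{k_0-2}{2}\rfloor\}$ with $s':=k_0-1-s\le p-2$, we have $G^{(s),\dagger}(w,t)=G^{(s'),\dagger}(w,t)$ in $\mathbb Z_p[w][[t]]$. (2) For $s\in\{k_0,\dots,\lfloor\frac{k_0-2+p-1}{2}\rfloor\}$ and $s'':=k_0-1-s+p-1$, we have $G^{(s),\dagger}(w,t)=G^{(s''),\dagger}(w,t)$ in $\mathbb Z_p[w][[t]]$.
   Context: Fix a prime $p\ge7$ and $k_0\in\{2,\dots,p\}$. $\{n\}$ is the residue of $n$ mod $p-1$ in $\{0,\dots,p-2\}$. $\mathcal K=\{k\ge2:k\equiv k_0\pmod{p-1}\}$, $k_\bullet=(k-k_0)/(p-1)$. For $s\in\{0,\dots,p-2\}$: $a_s=\{k_0-2-2s\}$, $\delta_s=\lfloor\frac{s+\{a_s+s\}}{p-1}\rfloor$; if $a_s+s<p-1$, $t_1^{(s)}=s+\delta_s$, $t_2^{(s)}=a_s+s+\delta_s+2$; otherwise $t_1^{(s)}=\{a_s+s\}+\delta_s+1$, $t_2^{(s)}=s+\delta_s+1$. For $k\in\mathcal K$: $d_k^{ur}(s)=\lfloor\frac{k_\bullet-t_1^{(s)}}{p+1}\rfloor+\lfloor\frac{k_\bullet-t_2^{(s)}}{p+1}\rfloor+2$, $d_k^{ur,\dagger}(s)=d_k^{ur}(s)+\delta_s$, $d_k^{Iw,\dagger}=2k_\bullet+2$. Set $m_n^{(s),\dagger}(k)=\min\{n-d_k^{ur,\dagger}(s),\,d_k^{Iw,\dagger}-d_k^{ur,\dagger}(s)-n\}$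 if $d_k^{ur,\dagger}(s)<n<d_k^{Iw,\dagger}-d_k^{ur,\dagger}(s)$, else $0$; $w_k=\exp((k-2)p)-1$; $g_n^{(s),\dagger}(w)=\prod_{k\in\mathcal K}(w-w_k)^{m_n^{(s),\dagger}(k)}$; $G^{(s),\dagger}(w,t)=\sum_{n\ge0}g_n^{(s),\dagger}(w)t^n$. *)

theory Defs
  imports "HOL-Computational_Algebra.Polynomial" "HOL-Computational_Algebra.Formal_Power_Series"
begin

definition res :: "int \<Rightarrow> int \<Rightarrow> int" where
  "res p n = n mod (p - 1)"

definition a_s :: "int \<Rightarrow> int \<Rightarrow> int \<Rightarrow> int" where
  "a_s p k0 s = res p (k0 - 2 - 2 * s)"

definition delta_s :: "int \<Rightarrow> int \<Rightarrow> int \<Rightarrow> int" where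
  "delta_s p k0 s = \<lfloor>real_of_int (s + res p (a_s p k0 s + s)) / real_of_int (p - 1)\<rfloor>"

definition t1 :: "int \<Rightarrow> int \<Rightarrow> int \<Rightarrow> int" where
  "t1 p k0 s = (if a_s p k0 s + s < p - 1 then s + delta_s p k0 s
                else res p (a_s p k0 s + s) + delta_s p k0 s + 1)"

definition t2 :: "int \<Rightarrow> int \<Rightarrow> int \<Rightarrow> int" where
  "t2 p k0 s = (if a_s p k0 s + s < p - 1 then a_s p k0 s + s + delta_s p k0 s + 2
                else s + delta_s p k0 s + 1)"

definition wtK :: "int \<Rightarrow> int \<Rightarrow> int set" where
  "wtK p k0 = {k. k \<ge> 2 \<and> k mod (p - 1) = k0 mod (p - 1)}"

definition kbul :: "int \<Rightarrow> int \<Rightarrow> int \<Rightarrow> int" where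
  "kbul p k0 k = (k - k0) div (p - 1)"

definition d_ur :: "int \<Rightarrow> int \<Rightarrow> int \<Rightarrow> int \<Rightarrow> int" where
  "d_ur p k0 s k =
     \<lfloor>real_of_int (kbul p k0 k - t1 p k0 s) / real_of_int (p + 1)\<rfloor>
   + \<lfloor>real_of_int (kbul p k0 k - t2 p k0 s) / real_of_int (p + 1)\<rfloor> + 2"

definition d_ur_dag :: "int \<Rightarrow> int \<Rightarrow> int \<Rightarrow> int \<Rightarrow> int" where
  "d_ur_dag p k0 s k = d_ur p k0 s k + delta_s p k0 s"

definition d_Iw_dag :: "int \<Rightarrow> int \<Rightarrow> int \<Rightarrow> int" where
  "d_Iw_dag p k0 k = 2 * kbul p k0 k + 2"

definition mult_dag :: "int \<Rightarrow> int \<Rightarrow> int \<Rightarrow> nat \<Rightarrow> int \<Rightarrow> nat" where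
  "mult_dag p k0 s n k =
     (if d_ur_dag p k0 s k < int n \<and> int n < d_Iw_dag p k0 k - d_ur_dag p k0 s k
      then nat (min (int n - d_ur_dag p k0 s k) (d_Iw_dag p k0 k - d_ur_dag p k0 s k - int n))
      else 0)"

text \<open>g_n: product over k in K of (w - w_k)^m; only finitely many factors are nontrivial,
  so the product is taken over those k with nonzero exponent.  The values w_k are
  a parameter wk (in the paper w_k = exp((k-2)p) - 1 in Z_p).\<close>
definition g_dag :: "int \<Rightarrow> int \<Rightarrow> (int \<Rightarrow> 'a::comm_ring_1) \<Rightarrow> int \<Rightarrow> nat \<Rightarrow> 'a poly" where
  "g_dag p k0 wk s n =
     (\<Prod>k\<in>{k \<in> wtK p k0. mult_dag p k0 s n k \<noteq> 0}. [:- wk k, 1:] ^ mult_dag p k0 s n k)"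

definition G_dag :: "int \<Rightarrow> int \<Rightarrow> (int \<Rightarrow> 'a::comm_ring_1) \<Rightarrow> int \<Rightarrow> 'a poly fps" where
  "G_dag p k0 wk s = Abs_fps (\<lambda>n. g_dag p k0 wk s n)"

end

theory Submission
  imports Defs
begin

text \<open>The series \<open>G\<^sup>(\<^sup>s\<^sup>)\<^sup>,\<^sup>\<dagger>\<close> depends on \<open>s\<close> only through \<open>d\<^sup>u\<^sup>r\<^sup>,\<^sup>\<dagger>(s)\<close>, hence only
  through the triple \<open>(\<delta>\<^sub>s, t\<^sub>1\<^sup>(\<^sup>s\<^sup>), t\<^sub>2\<^sup>(\<^sup>s\<^sup>))\<close>. Computing the residues explicitly, the paired
  slopes have identical triples, with one exception: for \<open>s = 0\<close> the partner \<open>k\<^sub>0 - 1\<close> has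
  triple \<open>(1, k\<^sub>0, p + 1)\<close> against \<open>(0, 0, k\<^sub>0)\<close>. This still gives the same \<open>d\<^sup>u\<^sup>r\<^sup>,\<^sup>\<dagger>\<close>, since
  raising a \<open>t\<close> by \<open>p + 1\<close> lowers its floor term by exactly one, which the extra \<open>\<delta> = 1\<close>
  compensates.\<close>

definition slope_data :: "int \<Rightarrow> int \<Rightarrow> int \<Rightarrow> int \<times> int \<times> int" where
  "slope_data p k0 s = (delta_s p k0 s, t1 p k0 s, t2 p k0 s)"

lemma mod_eq_add_mult:
  fixes x c m :: int
  assumes "0 \<le> x + c * m" "x + c * m < m"
  shows "x mod m = x + c * m"
proof -
  have "x mod m = (x + c * m) mod m" by simp
  also have "\<dots> = x + c * m" using assms by (rule mod_pos_pos_trivial)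
  finally show ?thesis .
qed

lemma div_eq_of_bounds:
  fixes x c m :: int
  assumes "0 \<le> x - c * m" "x - c * m < m"
  shows "x div m = c"
proof -
  have "m \<noteq> 0" using assms by linarith
  then have "x div m = (x - c * m) div m + c"
    by (metis add.commute diff_add_cancel div_mult_self3)
  also have "(x - c * m) div m = 0" using assms by (rule div_pos_pos_trivial)
  finally show ?thesis by simp
qed

lemma floor_of_int_half: "\<lfloor>real_of_int x / 2\<rfloor> = x div 2"
  using floor_divide_of_int_eq[of x 2] by simp

lemma G_dag_eqI:
  assumes "\<And>k. d_ur_dag p k0 s k = d_ur_dag p k0 s' k"
  shows "G_dag p k0 wk s = G_dag p k0 wk s'"
proof -
  have "mult_dag p k0 s n k = mult_dag p k0 s' n k" for n k
    unfolding mult_dag_def using assms by simp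
  then have "g_dag p k0 wk s n = g_dag p k0 wk s' n" for n
    unfolding g_dag_def by simp
  then show ?thesis unfolding G_dag_def by presburger
qed

lemma d_ur_dag_eqI:
  "slope_data p k0 s = slope_data p k0 s' \<Longrightarrow> d_ur_dag p k0 s k = d_ur_dag p k0 s' k"
  unfolding slope_data_def d_ur_dag_def d_ur_def by simp

lemma d_ur_dag_eqI_shift:
  assumes "p + 1 \<noteq> 0"
    and "slope_data p k0 s = (\<delta>, u, v)"
    and "slope_data p k0 s' = (\<delta> + 1, v, u + (p + 1))"
  shows "d_ur_dag p k0 s k = d_ur_dag p k0 s' k"
proof -
  have "(kbul p k0 k - (u + (p + 1))) div (p + 1) = (kbul p k0 k - u) div (p + 1) - 1"
    using div_mult_self3[OF assms(1), of "-1" "kbul p k0 k - u"] by (simp add: algebra_simps)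
  with assms(2,3) show ?thesis
    unfolding slope_data_def d_ur_dag_def d_ur_def floor_divide_of_int_eq by simp
qed

lemma slope_data_lower:
  assumes "0 \<le> s" "2 * s \<le> k0 - 2" "k0 \<le> p"
  shows "slope_data p k0 s = (0, s, k0 - s)"
proof -
  have a: "a_s p k0 s = k0 - 2 - 2 * s"
    unfolding a_s_def res_def using assms mod_eq_add_mult[of "k0 - 2 - 2 * s" 0 "p - 1"] by simp
  have r: "res p (a_s p k0 s + s) = k0 - 2 - s"
    unfolding a res_def using assms mod_eq_add_mult[of "k0 - 2 - s" 0 "p - 1"] by simp
  then have "delta_s p k0 s = 0"
    unfolding delta_s_def floor_divide_of_int_eq using assms div_eq_of_bounds[of _ 0 "p - 1"] by simp
  with a r assms show ?thesis unfolding slope_data_def t1_def t2_def by simp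
qed

lemma slope_data_lower_reflect:
  assumes "1 \<le> s" "2 * s \<le> k0 - 2" "k0 - 1 - s \<le> p - 2" "k0 \<le> p"
  shows "slope_data p k0 (k0 - 1 - s) = (0, s, k0 - s)"
proof -
  have a: "a_s p k0 (k0 - 1 - s) = 2 * s - k0 + p - 1"
    unfolding a_s_def res_def using assms mod_eq_add_mult[of "2 * s - k0" 1 "p - 1"] by simp
  have r: "res p (a_s p k0 (k0 - 1 - s) + (k0 - 1 - s)) = s - 1"
    unfolding a res_def using assms mod_eq_add_mult[of "s + p - 2" "-1" "p - 1"]
    by (simp add: algebra_simps)
  then have "delta_s p k0 (k0 - 1 - s) = 0"
    unfolding delta_s_def floor_divide_of_int_eq using assms div_eq_of_bounds[of _ 0 "p - 1"] by simp
  with a r assms show ?thesis unfolding slope_data_def t1_def t2_def by simp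
qed

lemma slope_data_k0_minus_1:
  assumes "2 \<le> k0" "k0 + 1 \<le> p"
  shows "slope_data p k0 (k0 - 1) = (1, k0, p + 1)"
proof -
  have a: "a_s p k0 (k0 - 1) = p - 1 - k0"
    unfolding a_s_def res_def using assms mod_eq_add_mult[of "- k0" 1 "p - 1"] by simp
  have r: "res p (a_s p k0 (k0 - 1) + (k0 - 1)) = p - 2"
    unfolding a res_def using assms mod_eq_add_mult[of "p - 2" 0 "p - 1"] by simp
  then have "delta_s p k0 (k0 - 1) = 1"
    unfolding delta_s_def floor_divide_of_int_eq using assms div_eq_of_bounds[of _ 1 "p - 1"] by simp
  with a r assms show ?thesis unfolding slope_data_def t1_def t2_def by simp
qed

lemma slope_data_upper:
  assumes "k0 \<le> s" "2 * s \<le> k0 + p - 3" "2 \<le> k0"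
  shows "slope_data p k0 s = (1, s + 1, k0 + p - s)"
proof -
  have a: "a_s p k0 s = k0 + p - 3 - 2 * s"
    unfolding a_s_def res_def using assms mod_eq_add_mult[of "k0 - 2 - 2 * s" 1 "p - 1"] by simp
  have r: "res p (a_s p k0 s + s) = k0 + p - 3 - s"
    unfolding a res_def using assms mod_eq_add_mult[of "k0 + p - 3 - s" 0 "p - 1"] by simp
  then have "delta_s p k0 s = 1"
    unfolding delta_s_def floor_divide_of_int_eq using assms div_eq_of_bounds[of _ 1 "p - 1"] by simp
  with a r assms show ?thesis unfolding slope_data_def t1_def t2_def by simp
qed

lemma slope_data_upper_reflect:
  assumes "k0 \<le> s" "2 * s \<le> k0 + p - 3" "2 \<le> k0"
  shows "slope_data p k0 (k0 - 1 - s + p - 1) = (1, s + 1, k0 + p - s)"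
proof -
  have a: "a_s p k0 (k0 - 1 - s + p - 1) = 2 * s - k0"
    unfolding a_s_def res_def using assms mod_eq_add_mult[of "2 * s - k0 - 2 * p + 2" 2 "p - 1"]
    by (simp add: algebra_simps)
  have r: "res p (a_s p k0 (k0 - 1 - s + p - 1) + (k0 - 1 - s + p - 1)) = s - 1"
    unfolding a res_def using assms mod_eq_add_mult[of "s + p - 2" "-1" "p - 1"]
    by (simp add: algebra_simps)
  then have "delta_s p k0 (k0 - 1 - s + p - 1) = 1"
    unfolding delta_s_def floor_divide_of_int_eq using assms div_eq_of_bounds[of _ 1 "p - 1"] by simp
  with a r assms show ?thesis unfolding slope_data_def t1_def t2_def by simp
qed

theorem mainTheorem6:
  fixes p k0 :: int and wk :: "int \<Rightarrow> 'a::comm_ring_1"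
  assumes "prime p" and "p \<ge> 7" and "2 \<le> k0" and "k0 \<le> p"
  shows "(\<forall>s. 0 \<le> s \<and> s \<le> \<lfloor>real_of_int (k0 - 2) / 2\<rfloor> \<and> k0 - 1 - s \<le> p - 2
            \<longrightarrow> G_dag p k0 wk s = G_dag p k0 wk (k0 - 1 - s))
       \<and> (\<forall>s. k0 \<le> s \<and> s \<le> \<lfloor>real_of_int (k0 - 2 + p - 1) / 2\<rfloor>
            \<longrightarrow> G_dag p k0 wk s = G_dag p k0 wk (k0 - 1 - s + p - 1))"
proof (intro conjI allI impI)
  fix s
  assume s: "0 \<le> s \<and> s \<le> \<lfloor>real_of_int (k0 - 2) / 2\<rfloor> \<and> k0 - 1 - s \<le> p - 2"
  then have "2 * s \<le> k0 - 2" unfolding floor_of_int_half by linarith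
  then have "d_ur_dag p k0 s k = d_ur_dag p k0 (k0 - 1 - s) k" for k
  proof (cases "s = 0")
    case True
    with s assms show ?thesis
      by (intro d_ur_dag_eqI_shift[where \<delta> = 0 and u = 0 and v = k0])
        (simp_all add: slope_data_k0_minus_1 slope_data_lower)
  next
    case False
    with s assms \<open>2 * s \<le> k0 - 2\<close> show ?thesis
      by (intro d_ur_dag_eqI) (simp add: slope_data_lower slope_data_lower_reflect)
  qed
  then show "G_dag p k0 wk s = G_dag p k0 wk (k0 - 1 - s)" by (rule G_dag_eqI)
next
  fix s
  assume s: "k0 \<le> s \<and> s \<le> \<lfloor>real_of_int (k0 - 2 + p - 1) / 2\<rfloor>"
  then have "2 * s \<le> k0 + p - 3" unfolding floor_of_int_half by linarith
  then have "slope_data p k0 s = slope_data p k0 (k0 - 1 - s + p - 1)"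
    using s assms slope_data_upper slope_data_upper_reflect by simp
  then show "G_dag p k0 wk s = G_dag p k0 wk (k0 - 1 - s + p - 1)"
    by (intro G_dag_eqI d_ur_dag_eqI)
qed

end
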